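(* There exists a ride sharing game (as defined in the context) that does not have the finite improvement property.
   Context: A ride sharing game consists of: a finite set of players $\mathcal{N}=\{1,\ldots,N\}$; a finite set of vehicles $\mathcal{M}=\{1,\ldots,M\}$, each with a common seating capacity $w\in\mathbb{N}_{>0}$; a finite set of times $\mathcal{T}=\{1,\ldots,T\}$; a directed simple graph $\mathcal{G}=(\mathcal{V},\mathcal{E})$ in which, in addition, every node has a loop to itself. $\mathcal{R}$ is the set of all paths $r=(v_1,e_1,v_2,\ldots,e_{T-1},v_T)$ of length $T-1$ in $\mathcal{G}$ (a round trip; edge $e_t$ is traversed during period $(t,t+1)$). Each player $i$ has a strategy set $\mathcal{A}_i\subset\mathcal{R}$; $\mathcal{A}=\times_i\mathcal{A}_i$ is the set of strategy profiles $\vec a$. An allocation map $\mu(i,t,\vec a)\in\mathcal{M}\cup\{\emptyset\}$ assigns player $i$ to a vehicle (or none) during period $(t,t+1)$; a vehicle moves along the edge of the players allocated to it, and $s_m(t,\vec a)$ is the number of players riding vehicle $m$ during $(t,t+1)$. Each edge $e$ has a cost function $c_e(w,s)\ge 0$, $s\in\mathbb{N}_{\ge0}$, which is monotone decreasing in $s$ for $s<w$ and monotone increasing for $s\ge w$. The cost of player $i$ is $c_i(\vec a)=\sum_{e_t\in a_i}c_e(w,s_{\mu(i,t,\vec a)}(t,\vec a))$. Players choose whole round trips simultaneously (one-shot game). A pure Nash equilibrium is a profile from which no player can reduce his cost by unilaterally changing his strategy. A game has the finite improvement property (FIP) if, starting from any strategy profile, letting players update their strategies one at a time always reaches a pure Nash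 equilibrium after finitely many updates. *)

theory Defs
  imports Complex_Main
begin

text \<open>A round trip (element of R): a list of T vertices v_1 ... v_T (list index k
  holds v_(k+1)) such that consecutive vertices are joined by an edge.\<close>
definition is_route :: "nat \<Rightarrow> 'v set \<Rightarrow> ('v \<times> 'v) set \<Rightarrow> 'v list \<Rightarrow> bool" where
  "is_route T V E r \<longleftrightarrow> length r = T \<and> set r \<subseteq> V \<and>
     (\<forall>t\<in>{1..<T}. (r ! (t - 1), r ! t) \<in> E)"

definition edge_at :: "'v list \<Rightarrow> nat \<Rightarrow> 'v \<times> 'v" where
  "edge_at r t = (r ! (t - 1), r ! t)"

definition profiles :: "nat \<Rightarrow> (nat \<Rightarrow> 'v list set) \<Rightarrow> 'v list list set" where
  "profiles N A = {a. length a = N \<and> (\<forall>i<N. a ! i \<in> A i)}"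

definition load :: "nat \<Rightarrow> (nat \<Rightarrow> nat \<Rightarrow> 'v list list \<Rightarrow> nat option)
    \<Rightarrow> nat \<Rightarrow> nat \<Rightarrow> 'v list list \<Rightarrow> nat" where
  "load N \<mu> m t a = card {j. j < N \<and> \<mu> j t a = Some m}"

definition ride_load :: "nat \<Rightarrow> (nat \<Rightarrow> nat \<Rightarrow> 'v list list \<Rightarrow> nat option)
    \<Rightarrow> nat \<Rightarrow> 'v list list \<Rightarrow> nat option \<Rightarrow> nat" where
  "ride_load N \<mu> t a opt = (case opt of None \<Rightarrow> 0 | Some m \<Rightarrow> load N \<mu> m t a)"

definition player_cost :: "nat \<Rightarrow> nat \<Rightarrow> nat \<Rightarrow> (nat \<Rightarrow> nat \<Rightarrow> 'v list list \<Rightarrow> nat option)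
    \<Rightarrow> ('v \<times> 'v \<Rightarrow> nat \<Rightarrow> nat \<Rightarrow> real) \<Rightarrow> nat \<Rightarrow> 'v list list \<Rightarrow> real" where
  "player_cost N w T \<mu> c i a =
     (\<Sum>t\<in>{1..<T}. c (edge_at (a ! i) t) w (ride_load N \<mu> t a (\<mu> i t a)))"

definition ride_sharing_game :: "nat \<Rightarrow> nat \<Rightarrow> nat \<Rightarrow> nat \<Rightarrow> 'v set \<Rightarrow> ('v \<times> 'v) set
    \<Rightarrow> (nat \<Rightarrow> 'v list set) \<Rightarrow> (nat \<Rightarrow> nat \<Rightarrow> 'v list list \<Rightarrow> nat option)
    \<Rightarrow> ('v \<times> 'v \<Rightarrow> nat \<Rightarrow> nat \<Rightarrow> real) \<Rightarrow> bool" where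
  "ride_sharing_game N M w T V E A \<mu> c \<longleftrightarrow>
     finite V \<and> E \<subseteq> V \<times> V \<and> (\<forall>v\<in>V. (v, v) \<in> E) \<and>
     w > 0 \<and> T \<ge> 1 \<and>
     (\<forall>i<N. A i \<subseteq> {r. is_route T V E r}) \<and>
     (\<forall>a\<in>profiles N A. \<forall>i<N. \<forall>t\<in>{1..<T}. \<mu> i t a \<in> insert None (Some ` {..<M})) \<and>
     (\<forall>a\<in>profiles N A. \<forall>i<N. \<forall>j<N. \<forall>t\<in>{1..<T}.
        \<mu> i t a \<noteq> None \<and> \<mu> i t a = \<mu> j t a \<longrightarrow> edge_at (a ! i) t = edge_at (a ! j) t) \<and>
     (\<forall>e\<in>E. \<forall>s. c e w s \<ge> 0) \<and>
     (\<forall>e\<in>E. \<forall>s. s + 1 < w \<longrightarrow> c e w (s + 1) \<le> c e w s) \<and>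
     (\<forall>e\<in>E. \<forall>s. w \<le> s \<longrightarrow> c e w s \<le> c e w (s + 1))"

definition improvement_step where
  "improvement_step N w T A \<mu> c a b \<longleftrightarrow> a \<in> profiles N A \<and>
     (\<exists>i<N. \<exists>x\<in>A i. b = a[i := x] \<and> player_cost N w T \<mu> c i b < player_cost N w T \<mu> c i a)"

text \<open>FIP: there is no infinite sequence of improvement steps (the strategy space is
  finite, so every maximal improvement path then ends in a pure Nash equilibrium).\<close>
definition has_FIP where
  "has_FIP N w T A \<mu> c \<longleftrightarrow>
     \<not> (\<exists>f :: nat \<Rightarrow> 'v list list. \<forall>k. improvement_step N w T A \<mu> c (f k) (f (Suc k)))"

end

theory Submission
  imports Defs
begin

text \<open>Matching pennies embedded in a ride sharing game with one period and two routes
  \<open>stay\<close> and \<open>go\<close>. The allocation map gives player 0 a vehicle to himself exactly when both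
  players choose the same route, and player 1 one exactly when they differ; riding alone
  costs 0 and riding nothing costs 1. So player 0 wants to match and player 1 to mismatch,
  and the four profiles form a cycle of strict improvements.\<close>

lemma improvement_cycle_not_FIP:
  assumes "cyc \<noteq> []"
    and "\<forall>k<length cyc. improvement_step N w T A \<mu> c (cyc ! k) (cyc ! (Suc k mod length cyc))"
  shows "\<not> has_FIP N w T A \<mu> c"
proof -
  let ?f = "\<lambda>k. cyc ! (k mod length cyc)"
  have "improvement_step N w T A \<mu> c (?f k) (?f (Suc k))" for k
  proof -
    have "k mod length cyc < length cyc"
      and "Suc k mod length cyc = Suc (k mod length cyc) mod length cyc"
      using assms(1) by (simp_all add: mod_Suc_eq)
    then show ?thesis
      using assms(2) by metis
  qed
  then show ?thesis
    unfolding has_FIP_def not_not by (intro exI[of _ ?f]) blast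
qed

lemma player_cost_single_period:
  "player_cost N w 2 \<mu> c i a = c (edge_at (a ! i) 1) w (ride_load N \<mu> 1 a (\<mu> i 1 a))"
proof -
  have "{1..<2::nat} = {1}" by auto
  then show ?thesis
    by (simp add: player_cost_def)
qed

definition stay :: "nat list" where "stay = [0, 0]"
definition go :: "nat list" where "go = [0, 1]"

definition pennies_edges :: "(nat \<times> nat) set" where
  "pennies_edges = {(0, 0), (1, 1), (0, 1)}"

definition pennies_strategies :: "nat \<Rightarrow> nat list set" where
  "pennies_strategies i = {stay, go}"

definition pennies_alloc :: "nat \<Rightarrow> nat \<Rightarrow> nat list list \<Rightarrow> nat option" where
  "pennies_alloc i t a =
     (if i = 0 then (if a ! 0 = a ! 1 then Some 0 else None)
      else (if a ! 0 \<noteq> a ! 1 then Some 1 else None))"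

definition solo_ride_cost :: "nat \<times> nat \<Rightarrow> nat \<Rightarrow> nat \<Rightarrow> real" where
  "solo_ride_cost e w s = (if s = 1 then 0 else 1)"

lemma pennies_alloc_injective:
  "i < 2 \<Longrightarrow> j < 2 \<Longrightarrow> pennies_alloc i t a \<noteq> None \<Longrightarrow> pennies_alloc i t a = pennies_alloc j t a \<Longrightarrow> i = j"
  by (auto simp: pennies_alloc_def split: if_splits)

lemma load_pennies_alloc:
  assumes "i < 2" "pennies_alloc i t a = Some m"
  shows "load 2 pennies_alloc m t a = 1"
proof -
  have "{j. j < 2 \<and> pennies_alloc j t a = Some m} = {i}"
    using assms pennies_alloc_injective[of i _ t a] by fastforce
  then show ?thesis
    by (simp add: load_def)
qed

lemma pennies_cost:
  assumes "i < 2"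
  shows "player_cost 2 2 2 pennies_alloc solo_ride_cost i a =
           (if pennies_alloc i 1 a = None then 1 else 0)"
  using assms load_pennies_alloc[OF assms]
  by (auto simp: player_cost_single_period ride_load_def solo_ride_cost_def split: option.split)

lemma pennies_game:
  "ride_sharing_game 2 2 2 2 {0, 1} pennies_edges pennies_strategies pennies_alloc solo_ride_cost"
  unfolding ride_sharing_game_def
proof (intro conjI)
  show "\<forall>i<2. pennies_strategies i \<subseteq> {r. is_route 2 {0, 1} pennies_edges r}"
    by (auto simp: pennies_strategies_def stay_def go_def is_route_def pennies_edges_def)
  show "\<forall>a\<in>profiles 2 pennies_strategies. \<forall>i<2. \<forall>t\<in>{1..<2}.
          pennies_alloc i t a \<in> insert None (Some ` {..<2})"
    by (auto simp: pennies_alloc_def)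
  show "\<forall>a\<in>profiles 2 pennies_strategies. \<forall>i<2. \<forall>j<2. \<forall>t\<in>{1..<2}.
          pennies_alloc i t a \<noteq> None \<and> pennies_alloc i t a = pennies_alloc j t a
            \<longrightarrow> edge_at (a ! i) t = edge_at (a ! j) t"
    using pennies_alloc_injective by blast
qed (auto simp: pennies_edges_def solo_ride_cost_def)

lemma pennies_improvement_step:
  assumes "x \<in> {stay, go}" "y \<in> {stay, go}" "z \<in> {stay, go}" "i < 2"
    and "pennies_alloc i 1 [x, y] = None" "pennies_alloc i 1 ([x, y][i := z]) \<noteq> None"
  shows "improvement_step 2 2 2 pennies_strategies pennies_alloc solo_ride_cost
           [x, y] ([x, y][i := z])"
proof -
  have "[x, y] \<in> profiles 2 pennies_strategies"
    using assms(1,2) by (auto simp: profiles_def pennies_strategies_def less_Suc_eq numeral_2_eq_2)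
  moreover have "player_cost 2 2 2 pennies_alloc solo_ride_cost i ([x, y][i := z])
                   < player_cost 2 2 2 pennies_alloc solo_ride_cost i [x, y]"
    using assms(4-6) by (simp add: pennies_cost)
  ultimately show ?thesis
    unfolding improvement_step_def pennies_strategies_def using assms(3,4) by blast
qed

definition pennies_cycle :: "nat list list list" where
  "pennies_cycle = [[stay, stay], [stay, go], [go, go], [go, stay]]"

lemma pennies_cycle_improves:
  "\<forall>k<length pennies_cycle. improvement_step 2 2 2 pennies_strategies pennies_alloc
     solo_ride_cost (pennies_cycle ! k) (pennies_cycle ! (Suc k mod length pennies_cycle))"
proof -
  have stay_go: "stay \<noteq> go" by (simp add: stay_def go_def)
  let ?step = "improvement_step 2 2 2 pennies_strategies pennies_alloc solo_ride_cost"
  have "?step [stay, stay] [stay, go]"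
    using pennies_improvement_step[of stay stay go 1] stay_go by (simp add: pennies_alloc_def)
  moreover have "?step [stay, go] [go, go]"
    using pennies_improvement_step[of stay go go 0] stay_go by (simp add: pennies_alloc_def)
  moreover have "?step [go, go] [go, stay]"
    using pennies_improvement_step[of go go stay 1] stay_go by (simp add: pennies_alloc_def)
  moreover have "?step [go, stay] [stay, stay]"
    using pennies_improvement_step[of go stay stay 0] stay_go by (simp add: pennies_alloc_def)
  ultimately show ?thesis
    by (auto simp: pennies_cycle_def less_Suc_eq)
qed

theorem theorem2:
  shows "\<exists>(N::nat) (M::nat) (w::nat) (T::nat) (V::nat set) (E::(nat \<times> nat) set)
           (A::nat \<Rightarrow> nat list set) (\<mu>::nat \<Rightarrow> nat \<Rightarrow> nat list list \<Rightarrow> nat option)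
           (c::nat \<times> nat \<Rightarrow> nat \<Rightarrow> nat \<Rightarrow> real).
           ride_sharing_game N M w T V E A \<mu> c \<and> \<not> has_FIP N w T A \<mu> c"
proof -
  have "\<not> has_FIP 2 2 2 pennies_strategies pennies_alloc solo_ride_cost"
    by (rule improvement_cycle_not_FIP[OF _ pennies_cycle_improves])
       (simp add: pennies_cycle_def)
  then show ?thesis
    using pennies_game by blast
qed

end
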